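(* Let $\mathcal{R}(z)$ be the stability function of the InDC method constructed with stiffly accurate IRK methods with nonsingular coefficient matrices $A$, using $M$ uniform quadrature points per step excluding the left-most point. Then $\lim_{|z|\to\infty}\mathcal{R}(z)=0$. Consequently, the method is $L$-stable if it is $A$-stable.
   Context: InDC method for an ODE $y'=F(y)$ over one step $[t_n,t_n+H]$: nodes $\tau_m=t_n+mh$, $h=H/M$, $m=0,\dots,M$; $\alpha_j$ ($j=1,\dots,M$) the Lagrange basis polynomials of degree $M-1$ for $\tau_1,\dots,\tau_M$; $S^m(\bar w)=\frac1h\sum_jw_j\int_{\tau_m}^{\tau_{m+1}}\alpha_j$, $S^{c_{mi}}(\bar w)=\frac1h\sum_jw_j\int_{\tau_m}^{\tau_m+c_ih}\alpha_j$, $P^{c_{mi}}(\bar w)=\sum_jw_j\alpha_j(\tau_m+c_ih)$. Prediction: an IRK method (tableau $A,b,c$) applied with step $h$ on each substep from $y_n$, giving $y^{(0)}_m$. Correction $k$: $y^{(k)}_0=y_n$ and $Y_{mi}=y^{(k)}_m+hS^{c_{mi}}(\bar F^{(k-1)})+h\sum_ja_{ij}\Delta K_{mj}$, $y^{(k)}_{m+1}=y^{(k)}_m+hS^m(\bar F^{(k-1)})+h\sum_ib_i\Delta K_{mi}$, $\Delta K_{mi}=F(Y_{mi})-P^{c_{mi}}(\bar F^{(k-1)})$, $\bar F^{(k-1)}=(F(y^{(k-1)}_j))_{j=1}^M$; output $y_{n+1}=y^{(K)}_M$. The stability function $\mathcal{R}$ is defined by $y_{n+1}=\mathcal{R}(z)y_n$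 when the method is applied to $y'=\lambda y$, with $z=\lambda H$ (equivalently up to rescaling $z=\lambda h$). Stiffly accurate: $b^T=e_s^TA$. $L$-stable: $A$-stable with $\mathcal{R}(z)\to0$ as $|z|\to\infty$. *)

theory Defs
  imports "HOL-Analysis.Interval_Integral" "Jordan_Normal_Form.Determinant"
begin

text \<open>Normalisation: t_n = 0, substep h = 1, nodes tau_m = m (m = 0..M).
  The quantities S, P are invariant under this rescaling; zeta = lambda h.\<close>

definition lagr :: "nat \<Rightarrow> nat \<Rightarrow> real \<Rightarrow> real" where
  "lagr M j t = (\<Prod>l\<in>{1..M} - {j}. (t - real l) / (real j - real l))"

definition lagr_int :: "nat \<Rightarrow> nat \<Rightarrow> real \<Rightarrow> real \<Rightarrow> real" where
  "lagr_int M j a b = (LBINT t=ereal a..ereal b. lagr M j t)"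

definition stages :: "nat \<Rightarrow> (nat \<Rightarrow> nat \<Rightarrow> real) \<Rightarrow> (nat \<Rightarrow> complex) \<Rightarrow> complex \<Rightarrow> nat \<Rightarrow> complex" where
  "stages s A r \<zeta> = (THE Y. (\<forall>i<s. Y i = r i + \<zeta> * (\<Sum>j<s. of_real (A i j) * Y j))
                          \<and> (\<forall>i\<ge>s. Y i = 0))"

text \<open>One IRK step of step size h applied to y' = lambda y (zeta = lambda h).\<close>
definition irk_step :: "nat \<Rightarrow> (nat \<Rightarrow> nat \<Rightarrow> real) \<Rightarrow> (nat \<Rightarrow> real) \<Rightarrow> complex \<Rightarrow> complex \<Rightarrow> complex" where
  "irk_step s A b \<zeta> y = (let Y = stages s A (\<lambda>_. y) \<zeta> in y + \<zeta> * (\<Sum>i<s. of_real (b i) * Y i))"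

text \<open>One correction substep m, given the previous iterate yp (yp j = y^(k-1)_j)
  and the current value y = y^(k)_m; returns y^(k)_(m+1).  Here Fb j = h F(y^(k-1)_j).\<close>
definition corr_step :: "nat \<Rightarrow> (nat \<Rightarrow> nat \<Rightarrow> real) \<Rightarrow> (nat \<Rightarrow> real) \<Rightarrow> (nat \<Rightarrow> real) \<Rightarrow> nat
     \<Rightarrow> complex \<Rightarrow> (nat \<Rightarrow> complex) \<Rightarrow> nat \<Rightarrow> complex \<Rightarrow> complex" where
  "corr_step s A b c M \<zeta> yp m y =
    (let Fb = (\<lambda>j. \<zeta> * yp j);
         Sm = (\<Sum>j=1..M. Fb j * of_real (lagr_int M j (real m) (real m + 1)));
         Sc = (\<lambda>i. \<Sum>j=1..M. Fb j * of_real (lagr_int M j (real m) (real m + c i)));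
         Pc = (\<lambda>i. \<Sum>j=1..M. Fb j * of_real (lagr M j (real m + c i)));
         Y = stages s A (\<lambda>i. y + Sc i - (\<Sum>j<s. of_real (A i j) * Pc j)) \<zeta>
     in y + Sm + (\<Sum>i<s. of_real (b i) * (\<zeta> * Y i - Pc i)))"

fun corr_sweep :: "nat \<Rightarrow> (nat \<Rightarrow> nat \<Rightarrow> real) \<Rightarrow> (nat \<Rightarrow> real) \<Rightarrow> (nat \<Rightarrow> real) \<Rightarrow> nat
     \<Rightarrow> complex \<Rightarrow> (nat \<Rightarrow> complex) \<Rightarrow> nat \<Rightarrow> complex" where
  "corr_sweep s A b c M \<zeta> yp 0 = 1"
| "corr_sweep s A b c M \<zeta> yp (Suc m) =
     corr_step s A b c M \<zeta> yp m (corr_sweep s A b c M \<zeta> yp m)"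

text \<open>Iterate k: indc_iter ... k m = y^(k)_m, with y_n = 1.\<close>
fun indc_iter :: "nat \<Rightarrow> (nat \<Rightarrow> nat \<Rightarrow> real) \<Rightarrow> (nat \<Rightarrow> real) \<Rightarrow> (nat \<Rightarrow> real) \<Rightarrow> nat
     \<Rightarrow> complex \<Rightarrow> nat \<Rightarrow> nat \<Rightarrow> complex" where
  "indc_iter s A b c M \<zeta> 0 = (\<lambda>m. (irk_step s A b \<zeta> ^^ m) 1)"
| "indc_iter s A b c M \<zeta> (Suc k) = corr_sweep s A b c M \<zeta> (indc_iter s A b c M \<zeta> k)"

text \<open>Stability function R(z), z = lambda H, H = M h, so zeta = lambda h = z / M;
  output y_(n+1) = y^(K)_M for y_n = 1.\<close>
definition indc_R :: "nat \<Rightarrow> (nat \<Rightarrow> nat \<Rightarrow> real) \<Rightarrow> (nat \<Rightarrow> real) \<Rightarrow> (nat \<Rightarrow> real) \<Rightarrow> nat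
     \<Rightarrow> nat \<Rightarrow> complex \<Rightarrow> complex" where
  "indc_R s A b c M K z = indc_iter s A b c M (z / of_nat M) K M"

definition A_stable :: "(complex \<Rightarrow> complex) \<Rightarrow> bool" where
  "A_stable R \<longleftrightarrow> (\<forall>z. Re z \<le> 0 \<longrightarrow> cmod (R z) \<le> 1)"

definition L_stable :: "(complex \<Rightarrow> complex) \<Rightarrow> bool" where
  "L_stable R \<longleftrightarrow> A_stable R \<and> (R \<longlongrightarrow> 0) at_infinity"

end

theory Submission
  imports Defs
begin

text \<open>Stiff accuracy makes every IRK substep, in the prediction as well as in each correction
  sweep, return its last stage. The stages solve \<open>Y = r + \<zeta> A Y\<close>; multiplying by a left inverse
  \<open>B\<close> of \<open>A\<close> gives \<open>\<zeta> Y = B (Y - r)\<close>, so for \<open>|\<zeta>|\<close> large compared with \<open>B\<close> the system is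
  uniquely solvable with \<open>|Y| = O(|r| / |\<zeta>|)\<close>. The right-hand sides are \<open>y + \<zeta> u\<close> with \<open>u\<close> a fixed
  linear combination of the previous iterate at the nodes \<open>1..M\<close>. By induction over sweeps and
  substeps every value at a node \<open>m \<ge> 1\<close> tends to \<open>0\<close> as \<open>\<zeta> \<rightarrow> \<infinity>\<close> (the value at node \<open>0\<close> is
  \<open>y\<^sub>n = 1\<close>), hence all right-hand sides are \<open>o(\<zeta>)\<close> and the next values tend to \<open>0\<close> again.\<close>

lemma left_inverse_if_det_nonzero:
  fixes A :: "nat \<Rightarrow> nat \<Rightarrow> real"
  assumes "Determinant.det (Matrix.mat s s (\<lambda>(i, j). A i j)) \<noteq> 0"
  shows "\<exists>B. \<forall>i<s. \<forall>j<s. (\<Sum>k<s. B i k * A k j) = (if i = j then 1 else 0)"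
proof -
  let ?A = "Matrix.mat s s (\<lambda>(i, j). A i j)"
  have "?A \<in> carrier_mat s s" by simp
  from det_non_zero_imp_unit[OF this assms, unfolded Units_def, of "()"]
  obtain Bm where Bm: "Bm \<in> carrier_mat s s" and BA: "Bm * ?A = 1\<^sub>m s"
    by (auto simp: ring_mat_def)
  show ?thesis
  proof (intro exI allI impI)
    fix i j assume "i < s" "j < s"
    then have "(Bm * ?A) $$ (i, j) = (\<Sum>k<s. Bm $$ (i, k) * A k j)"
      using Bm by (simp add: scalar_prod_def atLeast0LessThan)
    then show "(\<Sum>k<s. Bm $$ (i, k) * A k j) = (if i = j then 1 else 0)"
      using BA \<open>i < s\<close> \<open>j < s\<close> by simp
  qed
qed

definition stage_matrix :: "nat \<Rightarrow> (nat \<Rightarrow> nat \<Rightarrow> real) \<Rightarrow> complex \<Rightarrow> complex mat" where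
  "stage_matrix s A \<zeta> = Matrix.mat s s (\<lambda>(i, j). (if i = j then 1 else 0) - \<zeta> * of_real (A i j))"

lemma stage_matrix_carrier: "stage_matrix s A \<zeta> \<in> carrier_mat s s"
  by (simp add: stage_matrix_def)

lemma stage_matrix_mult_vec:
  assumes "v \<in> carrier_vec s" and "i < s"
  shows "(stage_matrix s A \<zeta> *\<^sub>v v) $ i = v $ i - \<zeta> * (\<Sum>j<s. of_real (A i j) * v $ j)"
proof -
  have "(stage_matrix s A \<zeta> *\<^sub>v v) $ i
      = (\<Sum>j<s. (if i = j then v $ j else 0) - \<zeta> * (of_real (A i j) * v $ j))"
    using assms by (auto simp: stage_matrix_def scalar_prod_def atLeast0LessThan algebra_simps
        intro!: sum.cong)
  then show ?thesis
    using assms(2) by (simp add: sum_subtractf sum_distrib_left)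
qed

locale left_invertible =
  fixes s :: nat and A B :: "nat \<Rightarrow> nat \<Rightarrow> real"
  assumes left_inverse: "\<forall>i<s. \<forall>j<s. (\<Sum>k<s. B i k * A k j) = (if i = j then 1 else 0)"
begin

definition inv_bound :: real where
  "inv_bound = (\<Sum>i<s. \<Sum>k<s. \<bar>B i k\<bar>)"

lemma inv_bound_nonneg: "0 \<le> inv_bound"
  unfolding inv_bound_def by (intro sum_nonneg) auto

lemma stage_system_scaled:
  fixes Y r :: "nat \<Rightarrow> complex"
  assumes sys: "\<forall>i<s. Y i = r i + \<zeta> * (\<Sum>j<s. of_real (A i j) * Y j)" and "i < s"
  shows "\<zeta> * Y i = (\<Sum>k<s. of_real (B i k) * (Y k - r k))"
proof -
  have "(\<Sum>k<s. of_real (B i k) * (Y k - r k))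
      = (\<Sum>k<s. of_real (B i k) * (\<zeta> * (\<Sum>j<s. of_real (A k j) * Y j)))"
    using sys by (intro sum.cong) (auto simp: algebra_simps)
  also have "\<dots> = \<zeta> * (\<Sum>k<s. \<Sum>j<s. of_real (B i k) * of_real (A k j) * Y j)"
    by (simp add: sum_distrib_left mult_ac)
  also have "\<dots> = \<zeta> * (\<Sum>j<s. of_real (\<Sum>k<s. B i k * A k j) * Y j)"
    by (subst sum.swap) (simp add: sum_distrib_right)
  also have "\<dots> = \<zeta> * (\<Sum>j<s. if i = j then Y j else 0)"
    using left_inverse \<open>i < s\<close>
    by (intro arg_cong[where f="\<lambda>x. \<zeta> * x"] sum.cong refl) (simp flip: of_real_mult of_real_sum)
  also have "\<dots> = \<zeta> * Y i"
    using \<open>i < s\<close> by simp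
  finally show ?thesis by simp
qed

lemma stage_system_norm_bound:
  fixes Y r :: "nat \<Rightarrow> complex"
  assumes sys: "\<forall>i<s. Y i = r i + \<zeta> * (\<Sum>j<s. of_real (A i j) * Y j)"
  shows "cmod \<zeta> * (\<Sum>i<s. cmod (Y i))
           \<le> inv_bound * ((\<Sum>i<s. cmod (Y i)) + (\<Sum>i<s. cmod (r i)))"
proof -
  let ?N = "(\<Sum>i<s. cmod (Y i)) + (\<Sum>i<s. cmod (r i))"
  have "cmod \<zeta> * cmod (Y i) \<le> (\<Sum>k<s. \<bar>B i k\<bar>) * ?N" if "i < s" for i
  proof -
    have "cmod \<zeta> * cmod (Y i) \<le> (\<Sum>k<s. \<bar>B i k\<bar> * cmod (Y k - r k))"
      using norm_sum[of "\<lambda>k. of_real (B i k) * (Y k - r k)" "{..<s}"]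
      by (simp add: stage_system_scaled[OF sys that, symmetric] norm_mult)
    also have "\<dots> \<le> (\<Sum>k<s. \<bar>B i k\<bar> * ?N)"
    proof (intro sum_mono mult_left_mono)
      fix k assume "k \<in> {..<s}"
      then have "cmod (Y k) + cmod (r k) \<le> ?N"
        by (intro add_mono member_le_sum) auto
      then show "cmod (Y k - r k) \<le> ?N"
        using norm_triangle_ineq4 order_trans by blast
    qed simp
    finally show ?thesis by (simp add: sum_distrib_right)
  qed
  then have "(\<Sum>i<s. cmod \<zeta> * cmod (Y i)) \<le> (\<Sum>i<s. (\<Sum>k<s. \<bar>B i k\<bar>) * ?N)"
    by (intro sum_mono) auto
  then show ?thesis
    by (simp add: inv_bound_def sum_distrib_left sum_distrib_right)
qed

lemma stage_system_norm_bound_large: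
  fixes Y r :: "nat \<Rightarrow> complex"
  assumes sys: "\<forall>i<s. Y i = r i + \<zeta> * (\<Sum>j<s. of_real (A i j) * Y j)"
    and large: "2 * inv_bound + 1 \<le> cmod \<zeta>"
  shows "(\<Sum>i<s. cmod (Y i)) \<le> 2 * inv_bound * (\<Sum>i<s. cmod (r i)) / cmod \<zeta>"
proof -
  let ?NY = "\<Sum>i<s. cmod (Y i)" and ?Nr = "\<Sum>i<s. cmod (r i)"
  have "inv_bound * ?NY \<le> (cmod \<zeta> / 2) * ?NY"
    using large by (intro mult_right_mono sum_nonneg) auto
  then have "(cmod \<zeta> / 2) * ?NY \<le> inv_bound * ?Nr"
    using stage_system_norm_bound[OF sys] by (simp add: algebra_simps)
  moreover have "0 < cmod \<zeta>"
    using large inv_bound_nonneg by linarith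
  ultimately show ?thesis
    by (simp add: pos_le_divide_eq field_simps)
qed

lemma homogeneous_stage_system_trivial:
  fixes Y :: "nat \<Rightarrow> complex"
  assumes sys: "\<forall>i<s. Y i = \<zeta> * (\<Sum>j<s. of_real (A i j) * Y j)"
    and large: "2 * inv_bound + 1 \<le> cmod \<zeta>" and "i < s"
  shows "Y i = 0"
proof -
  have "(\<Sum>i<s. cmod (Y i)) \<le> 0"
    using stage_system_norm_bound_large[of Y "\<lambda>_. 0", OF _ large] sys by simp
  moreover have "0 \<le> (\<Sum>i<s. cmod (Y i))"
    by (intro sum_nonneg) simp
  ultimately have "\<forall>i\<in>{..<s}. cmod (Y i) = 0"
    by (subst sum_nonneg_eq_0_iff[symmetric]) auto
  with \<open>i < s\<close> show ?thesis by simp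
qed

lemma stage_system_solvable:
  assumes large: "2 * inv_bound + 1 \<le> cmod \<zeta>"
  shows "\<exists>Y. \<forall>i<s. Y i = r i + \<zeta> * (\<Sum>j<s. of_real (A i j) * Y j)"
proof -
  let ?C = "stage_matrix s A \<zeta>"
  have "det ?C \<noteq> 0"
  proof
    assume "det ?C = 0"
    then obtain v where v: "v \<in> carrier_vec s" "v \<noteq> 0\<^sub>v s" "?C *\<^sub>v v = 0\<^sub>v s"
      using det_0_iff_vec_prod_zero_field[OF stage_matrix_carrier] by blast
    have "v $ i = \<zeta> * (\<Sum>j<s. of_real (A i j) * v $ j)" if "i < s" for i
    proof -
      have "(?C *\<^sub>v v) $ i = 0"
        using v(3) that by simp
      then show ?thesis
        by (simp only: stage_matrix_mult_vec[OF v(1) that] diff_eq_eq add_0_left)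
    qed
    then have "v = 0\<^sub>v s"
      using v(1) homogeneous_stage_system_trivial[OF _ large] by (intro eq_vecI) auto
    with v(2) show False ..
  qed
  from det_non_zero_imp_unit[OF stage_matrix_carrier this, unfolded Units_def, of "()"]
  obtain D where D: "D \<in> carrier_mat s s" and CD: "?C * D = 1\<^sub>m s"
    by (auto simp: ring_mat_def)
  define w where "w = D *\<^sub>v Matrix.vec s r"
  have w: "w \<in> carrier_vec s"
    using D by (simp add: w_def)
  have "?C *\<^sub>v w = Matrix.vec s r"
    using D stage_matrix_carrier[of s A \<zeta>]
    by (simp add: w_def assoc_mult_mat_vec[symmetric] CD)
  have "w $ i = r i + \<zeta> * (\<Sum>j<s. of_real (A i j) * w $ j)" if "i < s" for i
  proof -
    have "(?C *\<^sub>v w) $ i = r i"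
      using \<open>?C *\<^sub>v w = Matrix.vec s r\<close> that by simp
    then show ?thesis
      by (simp only: stage_matrix_mult_vec[OF w that] diff_eq_eq)
  qed
  then show ?thesis by blast
qed

lemma stages_solve:
  assumes large: "2 * inv_bound + 1 \<le> cmod \<zeta>"
  shows "\<forall>i<s. stages s A r \<zeta> i = r i + \<zeta> * (\<Sum>j<s. of_real (A i j) * stages s A r \<zeta> j)"
proof -
  let ?P = "\<lambda>Y. (\<forall>i<s. Y i = r i + \<zeta> * (\<Sum>j<s. of_real (A i j) * Y j)) \<and> (\<forall>i\<ge>s. Y i = 0)"
  obtain W where W: "\<forall>i<s. W i = r i + \<zeta> * (\<Sum>j<s. of_real (A i j) * W j)"
    using stage_system_solvable[OF large] by blast
  define Y where "Y i = (if i < s then W i else 0)" for i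
  have "(\<Sum>j<s. of_real (A i j) * Y j) = (\<Sum>j<s. of_real (A i j) * W j)" for i
    by (intro sum.cong) (auto simp: Y_def)
  with W have PY: "?P Y"
    by (simp add: Y_def)
  have "Z = Y" if PZ: "?P Z" for Z
  proof
    fix i
    have diff: "\<forall>i<s. Z i - Y i = \<zeta> * (\<Sum>j<s. of_real (A i j) * (Z j - Y j))"
    proof (intro allI impI)
      fix i assume "i < s"
      from PZ[THEN conjunct1, rule_format, OF this] PY[THEN conjunct1, rule_format, OF this]
      show "Z i - Y i = \<zeta> * (\<Sum>j<s. of_real (A i j) * (Z j - Y j))"
        by (simp add: algebra_simps sum_subtractf)
    qed
    show "Z i = Y i"
    proof (cases "i < s")
      case True
      with homogeneous_stage_system_trivial[OF diff large] show ?thesis by simp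
    next
      case False
      with PZ[THEN conjunct2] PY[THEN conjunct2] show ?thesis by simp
    qed
  qed
  with PY have "stages s A r \<zeta> = Y"
    unfolding stages_def by (rule the_equality)
  with PY show ?thesis
    by blast
qed

lemma eventually_large: "\<forall>\<^sub>F \<zeta> in at_infinity. 2 * inv_bound + 1 \<le> cmod \<zeta>"
  unfolding eventually_at_infinity by blast

lemma stages_tendsto_zero:
  fixes r :: "complex \<Rightarrow> nat \<Rightarrow> complex"
  assumes rhs: "\<forall>i<s. ((\<lambda>\<zeta>. r \<zeta> i / \<zeta>) \<longlongrightarrow> 0) at_infinity" and "i < s"
  shows "((\<lambda>\<zeta>. stages s A (r \<zeta>) \<zeta> i) \<longlongrightarrow> 0) at_infinity"
proof (rule Lim_null_comparison)
  show "\<forall>\<^sub>F \<zeta> in at_infinity.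
          norm (stages s A (r \<zeta>) \<zeta> i) \<le> 2 * inv_bound * (\<Sum>i<s. cmod (r \<zeta> i / \<zeta>))"
    using eventually_large
  proof eventually_elim
    case (elim \<zeta>)
    have "norm (stages s A (r \<zeta>) \<zeta> i) \<le> (\<Sum>i<s. cmod (stages s A (r \<zeta>) \<zeta> i))"
      using \<open>i < s\<close> by (intro member_le_sum) auto
    also have "\<dots> \<le> 2 * inv_bound * (\<Sum>i<s. cmod (r \<zeta> i)) / cmod \<zeta>"
      by (rule stage_system_norm_bound_large[OF stages_solve[OF elim] elim])
    also have "\<dots> = 2 * inv_bound * (\<Sum>i<s. cmod (r \<zeta> i / \<zeta>))"
      by (simp add: norm_divide sum_divide_distrib[symmetric])
    finally show ?case .
  qed
  have "((\<lambda>\<zeta>. \<Sum>i<s. cmod (r \<zeta> i / \<zeta>)) \<longlongrightarrow> (\<Sum>i<s. 0)) at_infinity"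
    using rhs by (intro tendsto_sum tendsto_norm_zero) auto
  from tendsto_mult_right_zero[OF this[simplified]]
  show "((\<lambda>\<zeta>. 2 * inv_bound * (\<Sum>i<s. cmod (r \<zeta> i / \<zeta>))) \<longlongrightarrow> 0) at_infinity"
    by (simp add: mult.commute)
qed

end

text \<open>The correction stages as a stage system \<open>Y = r + \<zeta> A Y\<close>: the interpolation terms
  \<open>-h \<Sigma>\<^sub>j a\<^sub>i\<^sub>j P\<close> coming from \<open>\<Delta>K\<close> are moved into \<open>r\<close>.\<close>
definition corr_stage_rhs :: "nat \<Rightarrow> (nat \<Rightarrow> nat \<Rightarrow> real) \<Rightarrow> (nat \<Rightarrow> real) \<Rightarrow> nat
     \<Rightarrow> complex \<Rightarrow> (nat \<Rightarrow> complex) \<Rightarrow> nat \<Rightarrow> complex \<Rightarrow> nat \<Rightarrow> complex" where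
  "corr_stage_rhs s A c M \<zeta> yp m y i =
     y + (\<Sum>j=1..M. \<zeta> * yp j * of_real (lagr_int M j (real m) (real m + c i)))
       - (\<Sum>j<s. of_real (A i j) * (\<Sum>l=1..M. \<zeta> * yp l * of_real (lagr M l (real m + c j))))"

lemma corr_stage_rhs_divide_tendsto_zero:
  fixes y :: "complex \<Rightarrow> complex" and yp :: "complex \<Rightarrow> nat \<Rightarrow> complex"
  assumes y: "((\<lambda>\<zeta>. y \<zeta> / \<zeta>) \<longlongrightarrow> 0) at_infinity"
    and yp: "\<forall>j\<in>{1..M}. ((\<lambda>\<zeta>. yp \<zeta> j) \<longlongrightarrow> 0) at_infinity"
  shows "((\<lambda>\<zeta>. corr_stage_rhs s A c M \<zeta> (yp \<zeta>) m (y \<zeta>) i / \<zeta>) \<longlongrightarrow> 0) at_infinity"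
proof -
  define U where "U \<zeta> = (\<Sum>j=1..M. yp \<zeta> j * of_real (lagr_int M j (real m) (real m + c i)))
       - (\<Sum>j<s. of_real (A i j) * (\<Sum>l=1..M. yp \<zeta> l * of_real (lagr M l (real m + c j))))" for \<zeta>
  have "((\<lambda>\<zeta>. y \<zeta> / \<zeta> + U \<zeta>) \<longlongrightarrow> 0 + ((\<Sum>j=1..M. 0 * of_real (lagr_int M j (real m) (real m + c i)))
       - (\<Sum>j<s. of_real (A i j) * (\<Sum>l=1..M. 0 * of_real (lagr M l (real m + c j)))))) at_infinity"
    unfolding U_def using y yp by (intro tendsto_intros) auto
  then have "((\<lambda>\<zeta>. y \<zeta> / \<zeta> + U \<zeta>) \<longlongrightarrow> 0) at_infinity"
    by simp
  moreover have "\<forall>\<^sub>F \<zeta> in at_infinity. y \<zeta> / \<zeta> + U \<zeta> = corr_stage_rhs s A c M \<zeta> (yp \<zeta>) m (y \<zeta>) i / \<zeta>"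
    unfolding eventually_at_infinity
  proof (intro exI allI impI)
    fix \<zeta> :: complex assume "1 \<le> norm \<zeta>"
    then have "\<zeta> \<noteq> 0" by auto
    moreover have "corr_stage_rhs s A c M \<zeta> (yp \<zeta>) m (y \<zeta>) i = y \<zeta> + \<zeta> * U \<zeta>"
      by (simp add: corr_stage_rhs_def U_def sum_distrib_left right_diff_distrib mult_ac)
    ultimately show "y \<zeta> / \<zeta> + U \<zeta> = corr_stage_rhs s A c M \<zeta> (yp \<zeta>) m (y \<zeta>) i / \<zeta>"
      by (simp add: field_simps)
  qed
  ultimately show ?thesis
    by (rule Lim_transform_eventually)
qed

locale stiffly_accurate_irk = left_invertible +
  fixes b c :: "nat \<Rightarrow> real"
  assumes stages_nonempty: "1 \<le> s"
    and row_sum: "\<forall>i<s. c i = (\<Sum>j<s. A i j)"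
    and consistent: "(\<Sum>i<s. b i) = 1"
    and stiffly_accurate: "\<forall>i<s. b i = A (s - 1) i"
begin

lemma last_node_eq_1: "c (s - 1) = 1"
proof -
  have "c (s - 1) = (\<Sum>j<s. A (s - 1) j)"
    using row_sum stages_nonempty by simp
  also have "\<dots> = (\<Sum>j<s. b j)"
    using stiffly_accurate by simp
  finally show ?thesis
    using consistent by simp
qed

lemma last_stage_eq_output:
  assumes large: "2 * inv_bound + 1 \<le> cmod \<zeta>"
  shows "r (s - 1) + \<zeta> * (\<Sum>i<s. of_real (b i) * stages s A r \<zeta> i) = stages s A r \<zeta> (s - 1)"
proof -
  have "(\<Sum>i<s. of_real (b i) * stages s A r \<zeta> i) = (\<Sum>j<s. of_real (A (s - 1) j) * stages s A r \<zeta> j)"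
    using stiffly_accurate by (intro sum.cong) auto
  also have "r (s - 1) + \<zeta> * \<dots> = stages s A r \<zeta> (s - 1)"
    using stages_solve[OF large, rule_format, of "s - 1"] stages_nonempty by simp
  finally show ?thesis .
qed

lemma irk_step_tendsto_zero:
  assumes "((\<lambda>\<zeta>. y \<zeta> / \<zeta>) \<longlongrightarrow> 0) at_infinity"
  shows "((\<lambda>\<zeta>. irk_step s A b \<zeta> (y \<zeta>)) \<longlongrightarrow> 0) at_infinity"
proof (rule Lim_transform_eventually)
  show "((\<lambda>\<zeta>. stages s A (\<lambda>_. y \<zeta>) \<zeta> (s - 1)) \<longlongrightarrow> 0) at_infinity"
    using assms stages_nonempty by (intro stages_tendsto_zero) auto
  show "\<forall>\<^sub>F \<zeta> in at_infinity. stages s A (\<lambda>_. y \<zeta>) \<zeta> (s - 1) = irk_step s A b \<zeta> (y \<zeta>)"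
    using eventually_large
  proof eventually_elim
    case (elim \<zeta>)
    show ?case
      using last_stage_eq_output[OF elim, of "\<lambda>_. y \<zeta>"] by (simp add: irk_step_def)
  qed
qed

lemma corr_step_eq_last_stage:
  assumes large: "2 * inv_bound + 1 \<le> cmod \<zeta>"
  shows "corr_step s A b c M \<zeta> yp m y = stages s A (corr_stage_rhs s A c M \<zeta> yp m y) \<zeta> (s - 1)"
proof -
  define Y where "Y = stages s A (corr_stage_rhs s A c M \<zeta> yp m y) \<zeta>"
  define Sm where "Sm = (\<Sum>j=1..M. \<zeta> * yp j * of_real (lagr_int M j (real m) (real m + 1)))"
  define Pc where "Pc i = (\<Sum>j=1..M. \<zeta> * yp j * of_real (lagr M j (real m + c i)))" for i
  have "corr_step s A b c M \<zeta> yp m y = y + Sm + (\<Sum>i<s. of_real (b i) * (\<zeta> * Y i - Pc i))"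
    unfolding corr_step_def Let_def Y_def Pc_def Sm_def corr_stage_rhs_def by simp
  also have "\<dots> = (y + Sm - (\<Sum>j<s. of_real (b j) * Pc j)) + \<zeta> * (\<Sum>i<s. of_real (b i) * Y i)"
    by (simp add: algebra_simps sum_subtractf sum_distrib_left)
  also have "y + Sm - (\<Sum>j<s. of_real (b j) * Pc j) = corr_stage_rhs s A c M \<zeta> yp m y (s - 1)"
    unfolding corr_stage_rhs_def Sm_def Pc_def last_node_eq_1 using stiffly_accurate by simp
  finally show ?thesis
    unfolding Y_def last_stage_eq_output[OF large] .
qed

lemma corr_step_tendsto_zero:
  assumes "((\<lambda>\<zeta>. y \<zeta> / \<zeta>) \<longlongrightarrow> 0) at_infinity"
    and "\<forall>j\<in>{1..M}. ((\<lambda>\<zeta>. yp \<zeta> j) \<longlongrightarrow> 0) at_infinity"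
  shows "((\<lambda>\<zeta>. corr_step s A b c M \<zeta> (yp \<zeta>) m (y \<zeta>)) \<longlongrightarrow> 0) at_infinity"
proof (rule Lim_transform_eventually)
  show "((\<lambda>\<zeta>. stages s A (corr_stage_rhs s A c M \<zeta> (yp \<zeta>) m (y \<zeta>)) \<zeta> (s - 1)) \<longlongrightarrow> 0) at_infinity"
    using assms stages_nonempty
    by (intro stages_tendsto_zero corr_stage_rhs_divide_tendsto_zero allI impI) auto
  show "\<forall>\<^sub>F \<zeta> in at_infinity. stages s A (corr_stage_rhs s A c M \<zeta> (yp \<zeta>) m (y \<zeta>)) \<zeta> (s - 1)
          = corr_step s A b c M \<zeta> (yp \<zeta>) m (y \<zeta>)"
    using eventually_large by eventually_elim (simp add: corr_step_eq_last_stage)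
qed

lemma indc_iter_tendsto:
  "((\<lambda>\<zeta>. indc_iter s A b c M \<zeta> k m) \<longlongrightarrow> (if m = 0 then 1 else 0)) at_infinity"
proof (induction k arbitrary: m)
  case 0
  show ?case
  proof (induction m)
    case (Suc m)
    then have "((\<lambda>\<zeta>. (irk_step s A b \<zeta> ^^ m) 1 / \<zeta>) \<longlongrightarrow> 0) at_infinity"
      by (intro tendsto_divide_0[OF _ filterlim_ident]) simp
    then show ?case
      by (simp add: irk_step_tendsto_zero)
  qed simp
next
  case (Suc k)
  have previous: "\<forall>j\<in>{1..M}. ((\<lambda>\<zeta>. indc_iter s A b c M \<zeta> k j) \<longlongrightarrow> 0) at_infinity"
  proof
    fix j :: nat assume "j \<in> {1..M}"
    then show "((\<lambda>\<zeta>. indc_iter s A b c M \<zeta> k j) \<longlongrightarrow> 0) at_infinity"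
      using Suc.IH[of j] by simp
  qed
  show ?case
  proof (induction m)
    case (Suc m)
    then have "((\<lambda>\<zeta>. indc_iter s A b c M \<zeta> (Suc k) m / \<zeta>) \<longlongrightarrow> 0) at_infinity"
      by (intro tendsto_divide_0[OF _ filterlim_ident])
    then show ?case
      using corr_step_tendsto_zero[OF _ previous] by simp
  qed simp
qed

end

lemma filterlim_divide_const_at_infinity:
  fixes d :: "'a::real_normed_field"
  assumes "d \<noteq> 0"
  shows "filterlim (\<lambda>z. z / d) at_infinity at_infinity"
  using tendsto_mult_filterlim_at_infinity[OF tendsto_const _ filterlim_ident, of "inverse d"] assms
  by (simp add: divide_inverse mult.commute)

theorem proposition5p1:
  fixes s M K :: nat and A :: "nat \<Rightarrow> nat \<Rightarrow> real" and b c :: "nat \<Rightarrow> real"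
  assumes "s \<ge> 1" and "M \<ge> 1"
    and row_sum: "\<forall>i<s. c i = (\<Sum>j<s. A i j)"
    and consistent: "(\<Sum>i<s. b i) = 1"
    and stiffly_accurate: "\<forall>i<s. b i = A (s - 1) i"
    and nonsingular: "Determinant.det (Matrix.mat s s (\<lambda>(i, j). A i j)) \<noteq> 0"
  shows "((indc_R s A b c M K) \<longlongrightarrow> 0) at_infinity
         \<and> (A_stable (indc_R s A b c M K) \<longrightarrow> L_stable (indc_R s A b c M K))"
proof -
  obtain B where "\<forall>i<s. \<forall>j<s. (\<Sum>k<s. B i k * A k j) = (if i = j then 1 else 0)"
    using left_inverse_if_det_nonzero[OF nonsingular] by blast
  then interpret stiffly_accurate_irk s A B b c
    using assms by unfold_locales auto
  have "filterlim (\<lambda>z. z / of_nat M) at_infinity (at_infinity :: complex filter)"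
    using \<open>M \<ge> 1\<close> by (intro filterlim_divide_const_at_infinity) simp
  from filterlim_compose[OF indc_iter_tendsto[of M K M] this]
  have "((\<lambda>z. indc_iter s A b c M (z / of_nat M) K M) \<longlongrightarrow> 0) at_infinity"
    using \<open>M \<ge> 1\<close> by simp
  then have "((indc_R s A b c M K) \<longlongrightarrow> 0) at_infinity"
    by (simp add: indc_R_def[abs_def])
  then show ?thesis
    unfolding L_stable_def by blast
qed

end
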